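(* For every $f\in\mathcal{F}_3$ and every $\mathbf{x}\in[0,1]^3$, $$f^{++}(\mathbf{x})=h(\mathbf{x})+\max_{\omega\in\{\underline\omega,\overline\omega\}}(g_2-g_1)\,\omega,$$ where, letting $x_{i^\star}\le x_{j^\star}\le x_{k^\star}$ denote the coordinates of $\mathbf{x}$ in nondecreasing order ($\{i^\star,j^\star,k^\star\}=\{1,2,3\}$), $\underline\omega=\max\big[(1-x_{k^\star})(1-x_{i^\star}-x_{j^\star}),\,0\big]$, $\overline\omega=\min\big[\prod_{i=1}^3x_i+\prod_{i=1}^3(1-x_i),\,(1-x_{j^\star})(1-x_{k^\star})\big]$, $g_1=1+f(1)+f(2)+f(3)$, $g_2=f(1,2)+f(1,3)+f(2,3)$, and $h(\mathbf{x})=\sum_{i=1}^3x_if(i)-\sum_{1\le i<j\le3}x_ix_j\big[f(i)+f(j)-f(i,j)\big]-(g_2-g_1)\big[\prod_{i=1}^3x_i+\prod_{i=1}^3(1-x_i)\big]$.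
   Context: $[n]=\{1,\dots,n\}$. A set function $f:2^{[n]}\to\mathbb{R}_+$ is monotone if $f(S)\le f(T)$ for $S\subseteq T$, submodular if $f(S)+f(T)\ge f(S\cap T)+f(S\cup T)$. $\mathcal{F}_n$ is the set of monotone submodular $f:2^{[n]}\to\mathbb{R}_+$ with $f(\emptyset)=0$, $f([n])=1$. Write $f(i)=f(\{i\})$, $f(i,j)=f(\{i,j\})$. For $\mathbf{x}\in[0,1]^n$, the upper pairwise independent extension is $f^{++}(\mathbf{x})=\max\sum_{S\subseteq[n]}\theta(S)f(S)$ over $\theta:2^{[n]}\to\mathbb{R}_{\ge0}$ with $\sum_S\theta(S)=1$, $\sum_{S\ni i}\theta(S)=x_i$ for all $i$, and $\sum_{S\ni i,j}\theta(S)=x_ix_j$ for all $i<j$. *)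

theory Defs
  imports Complex_Main
begin

definition monotone_sf :: "nat \<Rightarrow> (nat set \<Rightarrow> real) \<Rightarrow> bool" where
  "monotone_sf n f \<longleftrightarrow> (\<forall>S T. S \<subseteq> T \<and> T \<subseteq> {1..n} \<longrightarrow> f S \<le> f T)"

definition submodular_sf :: "nat \<Rightarrow> (nat set \<Rightarrow> real) \<Rightarrow> bool" where
  "submodular_sf n f \<longleftrightarrow> (\<forall>S T. S \<subseteq> {1..n} \<and> T \<subseteq> {1..n} \<longrightarrow>
      f S + f T \<ge> f (S \<inter> T) + f (S \<union> T))"

definition F_class :: "nat \<Rightarrow> (nat set \<Rightarrow> real) set" where
  "F_class n = {f. (\<forall>S \<subseteq> {1..n}. f S \<ge> 0) \<and> monotone_sf n f \<and> submodular_sf n f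
                  \<and> f {} = 0 \<and> f {1..n} = 1}"

definition pw_feasible :: "nat \<Rightarrow> (nat \<Rightarrow> real) \<Rightarrow> (nat set \<Rightarrow> real) \<Rightarrow> bool" where
  "pw_feasible n x \<theta> \<longleftrightarrow>
     (\<forall>S \<in> Pow {1..n}. \<theta> S \<ge> 0) \<and>
     (\<Sum>S\<in>Pow {1..n}. \<theta> S) = 1 \<and>
     (\<forall>i \<in> {1..n}. (\<Sum>S\<in>{S \<in> Pow {1..n}. i \<in> S}. \<theta> S) = x i) \<and>
     (\<forall>i \<in> {1..n}. \<forall>j \<in> {1..n}. i < j \<longrightarrow>
        (\<Sum>S\<in>{S \<in> Pow {1..n}. i \<in> S \<and> j \<in> S}. \<theta> S) = x i * x j)"

text \<open>Upper pairwise independent extension (the maximum is attained: the feasible set is a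
  nonempty compact polytope, so the supremum equals the maximum).\<close>
definition upper_pw_ext :: "nat \<Rightarrow> (nat set \<Rightarrow> real) \<Rightarrow> (nat \<Rightarrow> real) \<Rightarrow> real" where
  "upper_pw_ext n f x = Sup {(\<Sum>S\<in>Pow {1..n}. \<theta> S * f S) | \<theta>. pw_feasible n x \<theta>}"

end

theory Submission imports Defs begin

text \<open>On \<open>[3]\<close> the seven moment constraints leave a single degree of freedom: every feasible
  \<open>\<theta>\<close> is determined by \<open>\<omega> = \<theta>(\<emptyset>)\<close>, and nonnegativity confines \<open>\<omega>\<close> to an interval whose
  endpoints are the two bounds of the theorem. Since \<open>f(\<emptyset>) = 0\<close> and \<open>f([3]) = 1\<close>, the objective is
  affine in \<open>\<omega>\<close> with slope \<open>g\<^sub>2 - g\<^sub>1\<close>, so its maximum is attained at an endpoint. The interval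
  is nonempty because the independent product distribution is feasible.\<close>

lemma Pow_atLeastAtMost_3: "Pow {1..3::nat} = {{},{1},{2},{3},{1,2},{1,3},{2,3},{1,2,3}}"
proof -
  have "{1..3::nat} = {1,2,3}" by auto
  then show ?thesis by (simp add: Pow_insert insert_commute)
qed

lemma sum_Pow_atLeastAtMost_3:
  "(\<Sum>S\<in>Pow {1..3::nat}. g S) = g {} + g {1} + g {2} + g {3} + g {1,2} + g {1,3} + g {2,3} + g {1,2,3}"
  unfolding Pow_atLeastAtMost_3 by (simp add: insert_commute doubleton_eq_iff insert_eq_iff algebra_simps)

lemma pw_feasible_3_iff:
  "pw_feasible 3 x \<theta> \<longleftrightarrow>
    (0 \<le> \<theta> {} \<and> 0 \<le> \<theta> {1} \<and> 0 \<le> \<theta> {2} \<and> 0 \<le> \<theta> {3} \<and>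
     0 \<le> \<theta> {1,2} \<and> 0 \<le> \<theta> {1,3} \<and> 0 \<le> \<theta> {2,3} \<and> 0 \<le> \<theta> {1,2,3}) \<and>
    \<theta> {} + \<theta> {1} + \<theta> {2} + \<theta> {3} + \<theta> {1,2} + \<theta> {1,3} + \<theta> {2,3} + \<theta> {1,2,3} = 1 \<and>
    \<theta> {1} + \<theta> {1,2} + \<theta> {1,3} + \<theta> {1,2,3} = x 1 \<and>
    \<theta> {2} + \<theta> {1,2} + \<theta> {2,3} + \<theta> {1,2,3} = x 2 \<and>
    \<theta> {3} + \<theta> {1,3} + \<theta> {2,3} + \<theta> {1,2,3} = x 3 \<and>
    \<theta> {1,2} + \<theta> {1,2,3} = x 1 * x 2 \<and>
    \<theta> {1,3} + \<theta> {1,2,3} = x 1 * x 3 \<and>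
    \<theta> {2,3} + \<theta> {1,2,3} = x 2 * x 3"
proof -
  have e: "{1..3::nat} = {1,2,3}" by auto
  have fin: "finite (Pow {1..3::nat})" by simp
  have "Pow {Suc 0,2,3} = {{},{1},{2},{3},{1,2},{1,3},{2,3},{1,2,3}}"
    using Pow_atLeastAtMost_3 e by simp
  then show ?thesis
    unfolding pw_feasible_def sum.inter_filter[OF fin] sum_Pow_atLeastAtMost_3
    unfolding Pow_atLeastAtMost_3 e by (simp add: ac_simps)
qed

text \<open>\<open>P\<close> of the theorem: the probability that three independent coins with biases \<open>a, b, c\<close>
  all agree.\<close>
definition agree_prob3 :: "real \<Rightarrow> real \<Rightarrow> real \<Rightarrow> real" where
  "agree_prob3 a b c = a * b * c + (1 - a) * (1 - b) * (1 - c)"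

definition omega_lo :: "real \<Rightarrow> real \<Rightarrow> real \<Rightarrow> real" where
  "omega_lo a b c = max (max (max (agree_prob3 a b c - b * c) (agree_prob3 a b c - a * c))
                              (agree_prob3 a b c - a * b)) 0"

definition omega_hi :: "real \<Rightarrow> real \<Rightarrow> real \<Rightarrow> real" where
  "omega_hi a b c = min (min (min ((1 - b) * (1 - c)) ((1 - a) * (1 - c))) ((1 - a) * (1 - b)))
                         (agree_prob3 a b c)"

lemma agree_prob3_swap12: "agree_prob3 b a c = agree_prob3 a b c"
  and agree_prob3_swap23: "agree_prob3 a c b = agree_prob3 a b c"
  unfolding agree_prob3_def by (simp_all add: algebra_simps)

lemma omega_lo_swap12: "omega_lo b a c = omega_lo a b c"
  unfolding omega_lo_def agree_prob3_swap12[of a b c] mult.commute[of b a]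
  by (simp only: max.assoc max.commute max.left_commute)

lemma omega_lo_swap23: "omega_lo a c b = omega_lo a b c"
  unfolding omega_lo_def agree_prob3_swap23[of a b c] mult.commute[of c b]
  by (simp only: max.assoc max.commute max.left_commute)

lemma omega_hi_swap12: "omega_hi b a c = omega_hi a b c"
  unfolding omega_hi_def agree_prob3_swap12[of a b c] mult.commute[of "1 - b" "1 - a"]
  by (simp only: min.assoc min.commute min.left_commute)

lemma omega_hi_swap23: "omega_hi a c b = omega_hi a b c"
  unfolding omega_hi_def agree_prob3_swap23[of a b c] mult.commute[of "1 - c" "1 - b"]
  by (simp only: min.assoc min.commute min.left_commute)

lemma omega_bounds_sorted:
  fixes p q r :: real
  assumes "0 \<le> p" "p \<le> q" "q \<le> r" "r \<le> 1"
  shows "max ((1 - r) * (1 - p - q)) 0 = omega_lo p q r"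
    and "min (agree_prob3 p q r) ((1 - q) * (1 - r)) = omega_hi p q r"
proof -
  have "p * q \<le> p * r" "p * q \<le> q * r"
    using assms mult_left_mono[of q r p] mult_right_mono[of p r q] by (simp_all add: mult.commute)
  moreover have "(1 - r) * (1 - p - q) = agree_prob3 p q r - p * q"
    by (simp add: agree_prob3_def algebra_simps)
  ultimately show "max ((1 - r) * (1 - p - q)) 0 = omega_lo p q r"
    unfolding omega_lo_def by linarith
  have "(1 - q) * (1 - r) \<le> (1 - p) * (1 - r)" "(1 - q) * (1 - r) \<le> (1 - p) * (1 - q)"
    using assms mult_right_mono[of "1 - q" "1 - p" "1 - r"] mult_left_mono[of "1 - r" "1 - p" "1 - q"]
    by (simp_all add: mult.commute)
  then show "min (agree_prob3 p q r) ((1 - q) * (1 - r)) = omega_hi p q r"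
    unfolding omega_hi_def by linarith
qed

lemma omega_bounds_order_statistics:
  fixes a b c :: real
  assumes "0 \<le> a" "a \<le> 1" "0 \<le> b" "b \<le> 1" "0 \<le> c" "c \<le> 1"
  defines "hi \<equiv> Max {a, b, c}" and "lo \<equiv> Min {a, b, c}"
  shows "max ((1 - hi) * (1 - lo - (a + b + c - hi - lo))) 0 = omega_lo a b c"
    and "min (agree_prob3 a b c) ((1 - (a + b + c - hi - lo)) * (1 - hi)) = omega_hi a b c"
proof -
  obtain p q r where pqr: "p \<le> q" "q \<le> r" "{p, q, r} = {a, b, c}" "p + q + r = a + b + c"
    and inv: "omega_lo p q r = omega_lo a b c" "omega_hi p q r = omega_hi a b c"
      "agree_prob3 p q r = agree_prob3 a b c"
  proof -
    note swap = insert_commute omega_lo_swap12 omega_lo_swap23 omega_hi_swap12 omega_hi_swap23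
      agree_prob3_swap12 agree_prob3_swap23
    consider "a \<le> b" "b \<le> c" | "a \<le> c" "c \<le> b" | "b \<le> a" "a \<le> c"
      | "b \<le> c" "c \<le> a" | "c \<le> a" "a \<le> b" | "c \<le> b" "b \<le> a" by linarith
    then show thesis
    proof cases
      case 1 then show thesis by (rule that[of a b c]) (simp_all add: swap)
    next
      case 2 then show thesis by (rule that[of a c b]) (simp_all add: swap)
    next
      case 3 then show thesis by (rule that[of b a c]) (simp_all add: swap)
    next
      case 4 then show thesis by (rule that[of b c a]) (simp_all add: swap)
    next
      case 5 then show thesis by (rule that[of c a b]) (simp_all add: swap)
    next
      case 6 then show thesis by (rule that[of c b a]) (simp_all add: swap)
    qed
  qed
  have "hi = r" "lo = p"
    unfolding hi_def lo_def pqr(3)[symmetric] using pqr(1,2) by (auto simp: max_def min_def)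
  moreover have "0 \<le> p" "r \<le> 1"
    using pqr(3) assms(1-6) by (auto simp: insert_eq_iff doubleton_eq_iff)
  moreover have "a + b + c - hi - lo = q"
    using calculation(1,2) pqr(4) by simp
  ultimately show "max ((1 - hi) * (1 - lo - (a + b + c - hi - lo))) 0 = omega_lo a b c"
    and "min (agree_prob3 a b c) ((1 - (a + b + c - hi - lo)) * (1 - hi)) = omega_hi a b c"
    using omega_bounds_sorted[of p q r] pqr(1,2) inv by simp_all
qed

lemma pw_feasible_3_iff_omega:
  fixes x :: "nat \<Rightarrow> real"
  defines "P \<equiv> agree_prob3 (x 1) (x 2) (x 3)"
  shows "pw_feasible 3 x \<theta> \<longleftrightarrow>
    \<theta> {1} = (1 - x 2) * (1 - x 3) - \<theta> {} \<and>
    \<theta> {2} = (1 - x 1) * (1 - x 3) - \<theta> {} \<and>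
    \<theta> {3} = (1 - x 1) * (1 - x 2) - \<theta> {} \<and>
    \<theta> {1,2} = \<theta> {} - (P - x 1 * x 2) \<and>
    \<theta> {1,3} = \<theta> {} - (P - x 1 * x 3) \<and>
    \<theta> {2,3} = \<theta> {} - (P - x 2 * x 3) \<and>
    \<theta> {1,2,3} = P - \<theta> {} \<and>
    omega_lo (x 1) (x 2) (x 3) \<le> \<theta> {} \<and> \<theta> {} \<le> omega_hi (x 1) (x 2) (x 3)"
proof -
  have "P = 1 - x 1 - x 2 - x 3 + x 1 * x 2 + x 1 * x 3 + x 2 * x 3"
    "(1 - x 2) * (1 - x 3) = 1 - x 2 - x 3 + x 2 * x 3"
    "(1 - x 1) * (1 - x 3) = 1 - x 1 - x 3 + x 1 * x 3"
    "(1 - x 1) * (1 - x 2) = 1 - x 1 - x 2 + x 1 * x 2"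
    unfolding P_def agree_prob3_def by (simp_all add: algebra_simps)
  then show ?thesis
    unfolding pw_feasible_3_iff omega_lo_def omega_hi_def P_def[symmetric]
      max.bounded_iff min.bounded_iff
    by (intro iffI conjI; elim conjE; linarith)
qed

lemma pw_feasible_3_indep:
  fixes x :: "nat \<Rightarrow> real"
  assumes "\<forall>i \<in> {1..3}. 0 \<le> x i \<and> x i \<le> 1"
  shows "pw_feasible 3 x (\<lambda>S. \<Prod>i\<in>{1..3}. if i \<in> S then x i else 1 - x i)"
proof -
  have e: "{1..3::nat} = {1,2,3}" by auto
  have "0 \<le> x 1" "x 1 \<le> 1" "0 \<le> x 2" "x 2 \<le> 1" "0 \<le> x 3" "x 3 \<le> 1"
    using assms by (auto simp: e)
  then show ?thesis
    unfolding pw_feasible_3_iff e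
    by simp (simp add: algebra_simps)
qed

lemma omega_lo_le_omega_hi:
  fixes x :: "nat \<Rightarrow> real"
  assumes "\<forall>i \<in> {1..3}. 0 \<le> x i \<and> x i \<le> 1"
  shows "omega_lo (x 1) (x 2) (x 3) \<le> omega_hi (x 1) (x 2) (x 3)"
  using pw_feasible_3_indep[OF assms] unfolding pw_feasible_3_iff_omega by linarith

lemma pw_feasible_3_empty_image:
  "(\<lambda>\<theta>. \<theta> {}) ` {\<theta>. pw_feasible 3 x \<theta>} = {omega_lo (x 1) (x 2) (x 3) .. omega_hi (x 1) (x 2) (x 3)}"
proof (intro equalityI subsetI)
  fix \<omega> assume "\<omega> \<in> {omega_lo (x 1) (x 2) (x 3) .. omega_hi (x 1) (x 2) (x 3)}"
  then have bounds: "omega_lo (x 1) (x 2) (x 3) \<le> \<omega>" "\<omega> \<le> omega_hi (x 1) (x 2) (x 3)" by auto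
  define P where "P = agree_prob3 (x 1) (x 2) (x 3)"
  define \<theta> :: "nat set \<Rightarrow> real" where "\<theta> S =
    (if S = {1} then (1 - x 2) * (1 - x 3) - \<omega>
     else if S = {2} then (1 - x 1) * (1 - x 3) - \<omega>
     else if S = {3} then (1 - x 1) * (1 - x 2) - \<omega>
     else if S = {1,2} then \<omega> - (P - x 1 * x 2)
     else if S = {1,3} then \<omega> - (P - x 1 * x 3)
     else if S = {2,3} then \<omega> - (P - x 2 * x 3)
     else if S = {1,2,3} then P - \<omega> else \<omega>)" for S
  have "pw_feasible 3 x \<theta>"
    unfolding pw_feasible_3_iff_omega P_def[symmetric] using bounds
    by (simp add: \<theta>_def insert_eq_iff doubleton_eq_iff)
  moreover have "\<theta> {} = \<omega>" by (simp add: \<theta>_def)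
  ultimately show "\<omega> \<in> (\<lambda>\<theta>. \<theta> {}) ` {\<theta>. pw_feasible 3 x \<theta>}" by force
qed (auto simp: pw_feasible_3_iff_omega)

lemma pw_objective_3:
  fixes f :: "nat set \<Rightarrow> real" and x :: "nat \<Rightarrow> real"
  assumes "pw_feasible 3 x \<theta>" "f {} = 0" "f {1,2,3} = 1"
  defines "g1 \<equiv> 1 + f {1} + f {2} + f {3}" and "g2 \<equiv> f {1,2} + f {1,3} + f {2,3}"
  shows "(\<Sum>S\<in>Pow {1..3}. \<theta> S * f S) =
    (\<Sum>i\<in>{1..3}. x i * f {i})
    - (\<Sum>(i,j)\<in>{(i,j). i \<in> {1..3} \<and> j \<in> {1..3} \<and> i < j}. x i * x j * (f {i} + f {j} - f {i,j}))
    - (g2 - g1) * agree_prob3 (x 1) (x 2) (x 3) + (g2 - g1) * \<theta> {}"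
proof -
  have e: "{1..3::nat} = {1,2,3}" by auto
  have pairs: "{(i,j). i \<in> {1..3::nat} \<and> j \<in> {1..3} \<and> i < j} = {(1,2),(1,3),(2,3)}"
    by (auto simp: e)
  define P where "P = agree_prob3 (x 1) (x 2) (x 3)"
  have \<theta>: "\<theta> {1} = (1 - x 2) * (1 - x 3) - \<theta> {}" "\<theta> {2} = (1 - x 1) * (1 - x 3) - \<theta> {}"
    "\<theta> {3} = (1 - x 1) * (1 - x 2) - \<theta> {}" "\<theta> {1,2} = \<theta> {} - (P - x 1 * x 2)"
    "\<theta> {1,3} = \<theta> {} - (P - x 1 * x 3)" "\<theta> {2,3} = \<theta> {} - (P - x 2 * x 3)"
    "\<theta> {1,2,3} = P - \<theta> {}"
    using assms(1) unfolding pw_feasible_3_iff_omega P_def by blast+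
  show ?thesis
    unfolding sum_Pow_atLeastAtMost_3 pairs \<theta> unfolding e assms(2,3)
    by (simp add: g1_def g2_def P_def agree_prob3_def algebra_simps)
qed

lemma cSup_affine_image_atLeastAtMost:
  fixes lo hi c d :: real
  assumes "lo \<le> hi"
  shows "Sup ((\<lambda>w. c + d * w) ` {lo..hi}) = c + max (d * lo) (d * hi)"
proof (rule cSup_eq_maximum)
  show "c + max (d * lo) (d * hi) \<in> (\<lambda>w. c + d * w) ` {lo..hi}"
    using assms by (cases "d * lo \<le> d * hi") (auto simp: max_def)
next
  fix y assume "y \<in> (\<lambda>w. c + d * w) ` {lo..hi}"
  then obtain w where "lo \<le> w" "w \<le> hi" "y = c + d * w" by auto
  moreover have "d * w \<le> max (d * lo) (d * hi)"
  proof (cases "0 \<le> d")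
    case True
    then show ?thesis using mult_left_mono[OF \<open>w \<le> hi\<close> True] by simp
  next
    case False
    then have "d * w \<le> d * lo" using \<open>lo \<le> w\<close> by (simp add: mult_left_mono_neg)
    then show ?thesis by simp
  qed
  ultimately show "y \<le> c + max (d * lo) (d * hi)" by simp
qed

theorem mainTheorem6:
  fixes f :: "nat set \<Rightarrow> real" and x :: "nat \<Rightarrow> real"
  assumes "f \<in> F_class 3"
    and "\<forall>i \<in> {1..3}. 0 \<le> x i \<and> x i \<le> 1"
  shows "let xmax = Max {x 1, x 2, x 3};
             xmin = Min {x 1, x 2, x 3};
             xmid = x 1 + x 2 + x 3 - xmax - xmin;
             P = x 1 * x 2 * x 3 + (1 - x 1) * (1 - x 2) * (1 - x 3);
             \<omega>lo = max ((1 - xmax) * (1 - xmin - xmid)) 0;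
             \<omega>hi = min P ((1 - xmid) * (1 - xmax));
             g1 = 1 + f {1} + f {2} + f {3};
             g2 = f {1,2} + f {1,3} + f {2,3};
             h = (\<Sum>i\<in>{1..3}. x i * f {i})
                 - (\<Sum>(i,j)\<in>{(i,j). i \<in> {1..3} \<and> j \<in> {1..3} \<and> i < j}.
                        x i * x j * (f {i} + f {j} - f {i,j}))
                 - (g2 - g1) * P
         in upper_pw_ext 3 f x = h + max ((g2 - g1) * \<omega>lo) ((g2 - g1) * \<omega>hi)"
proof -
  have e: "{1..3::nat} = {1,2,3}" by auto
  have x: "0 \<le> x 1" "x 1 \<le> 1" "0 \<le> x 2" "x 2 \<le> 1" "0 \<le> x 3" "x 3 \<le> 1"
    using assms(2) by (auto simp: e)
  have f: "f {} = 0" "f {1,2,3} = 1"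
    using assms(1) unfolding F_class_def e by auto
  define d where "d = f {1,2} + f {1,3} + f {2,3} - (1 + f {1} + f {2} + f {3})"
  define h where "h = (\<Sum>i\<in>{1..3}. x i * f {i})
    - (\<Sum>(i,j)\<in>{(i,j). i \<in> {1..3} \<and> j \<in> {1..3} \<and> i < j}. x i * x j * (f {i} + f {j} - f {i,j}))
    - d * agree_prob3 (x 1) (x 2) (x 3)"
  have objective: "(\<Sum>S\<in>Pow {1..3}. \<theta> S * f S) = h + d * \<theta> {}" if "pw_feasible 3 x \<theta>" for \<theta>
    unfolding h_def d_def by (rule pw_objective_3[OF that f])
  have "{\<Sum>S\<in>Pow {1..3}. \<theta> S * f S | \<theta>. pw_feasible 3 x \<theta>} =
        (\<lambda>\<theta>. \<Sum>S\<in>Pow {1..3}. \<theta> S * f S) ` {\<theta>. pw_feasible 3 x \<theta>}"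
    by blast
  also have "\<dots> = (\<lambda>\<theta>. h + d * \<theta> {}) ` {\<theta>. pw_feasible 3 x \<theta>}"
    by (intro image_cong refl) (metis mem_Collect_eq objective)
  also have "\<dots> = (\<lambda>\<omega>. h + d * \<omega>) ` {omega_lo (x 1) (x 2) (x 3) .. omega_hi (x 1) (x 2) (x 3)}"
    unfolding pw_feasible_3_empty_image[symmetric] image_image ..
  finally have "upper_pw_ext 3 f x =
      h + max (d * omega_lo (x 1) (x 2) (x 3)) (d * omega_hi (x 1) (x 2) (x 3))"
    unfolding upper_pw_ext_def
    using cSup_affine_image_atLeastAtMost omega_lo_le_omega_hi[OF assms(2)] by simp
  then show ?thesis
    unfolding Let_def agree_prob3_def[symmetric] omega_bounds_order_statistics[OF x]
    by (simp add: h_def d_def)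
qed

end
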